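(* Consider an execution of Algorithm msu1 on a CNF formula $\varphi$, and let $j\ge 1$. At the $j$-th call of the SAT oracle, either the working formula $\varphi_W$ is unsatisfiable, or every satisfying assignment of $\varphi_W$ assigns value 1 to exactly $j-1$ blocking variables.
   Context: Algorithm msu1 (Fu and Malik). Input: a CNF formula $\varphi$ (a finite set of clauses). All clauses of $\varphi$ are tagged non-auxiliary. The working formula is initialised to $\varphi_W:=\varphi$. Each iteration calls a SAT oracle on $\varphi_W$; the $j$-th such call is iteration $j$. If $\varphi_W$ is unsatisfiable, the oracle returns an unsatisfiable core $\varphi_C\subseteq\varphi_W$, i.e. a subset of the clauses of $\varphi_W$ that is itself unsatisfiable. Then, for each non-auxiliary clause $\omega\in\varphi_C$, a fresh variable $b$ (a blocking variable) is created and $\omega$ is replaced in $\varphi_W$ by $\omega\vee b$. The new clause is tagged non-auxiliary, and $b$ is associated with the original clause from which $\omega$ descends. Let $BV$ be the set of blocking variables created in this iteration. A CNF encoding of $\sum_{b\in BV} b=1$ is added to $\varphi_W$; its clauses are tagged auxiliary. This encoding may use additional auxiliary variables; an assignment to $BV$ extends to a satisfying assignment of the encoding iff exactly one variable of $BV$ is true. If $\varphi_W$ is satisfiable, the algorithm stops and returns $|\varphi|-\nu$, where $\nu$ is the number of blocking variables assigned value 1. *)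

theory Defs
  imports Main
begin

datatype 'v lit = Pos 'v | Neg 'v

type_synonym 'v clause = "'v lit set"
type_synonym 'v assignment = "'v \<Rightarrow> bool"

(* a tagged clause: (clause, is_auxiliary) *)
type_synonym 'v tclause = "'v clause \<times> bool"

fun lit_var :: "'v lit \<Rightarrow> 'v" where
  "lit_var (Pos v) = v" | "lit_var (Neg v) = v"

fun lit_sat :: "'v assignment \<Rightarrow> 'v lit \<Rightarrow> bool" where
  "lit_sat \<sigma> (Pos v) = \<sigma> v" | "lit_sat \<sigma> (Neg v) = (\<not> \<sigma> v)"

definition clause_sat :: "'v assignment \<Rightarrow> 'v clause \<Rightarrow> bool" where
  "clause_sat \<sigma> c \<longleftrightarrow> (\<exists>l\<in>c. lit_sat \<sigma> l)"

definition cnf_sat :: "'v assignment \<Rightarrow> 'v clause set \<Rightarrow> bool" where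
  "cnf_sat \<sigma> F \<longleftrightarrow> (\<forall>c\<in>F. clause_sat \<sigma> c)"

definition satisfiable :: "'v clause set \<Rightarrow> bool" where
  "satisfiable F \<longleftrightarrow> (\<exists>\<sigma>. cnf_sat \<sigma> F)"

definition clause_vars :: "'v clause set \<Rightarrow> 'v set" where
  "clause_vars F = (\<Union>c\<in>F. lit_var ` c)"

definition exactly_one_encoding :: "'v clause set \<Rightarrow> 'v set \<Rightarrow> bool" where
  "exactly_one_encoding E BV \<longleftrightarrow> finite E \<and> (\<forall>c\<in>E. finite c) \<and>
     (\<forall>\<sigma>. (\<exists>\<tau>. (\<forall>b\<in>BV. \<tau> b = \<sigma> b) \<and> cnf_sat \<tau> E) \<longleftrightarrow> card {b\<in>BV. \<sigma> b} = 1)"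

(* one iteration of msu1 after an unsatisfiable oracle call.
   State: (working formula as a set of tagged clauses, set of all blocking variables so far). *)
definition msu1_step :: "('v tclause set \<times> 'v set) \<Rightarrow> ('v tclause set \<times> 'v set) \<Rightarrow> bool" where
  "msu1_step s s' \<longleftrightarrow> (\<exists>C f E.
     let W = fst s; B = snd s; N = {c\<in>C. \<not> snd c}; BV = f ` N in
     C \<subseteq> W \<and> \<not> satisfiable (fst ` C) \<and>
     inj_on f N \<and> BV \<inter> clause_vars (fst ` W) = {} \<and>
     exactly_one_encoding E BV \<and>
     s' = ((W - N) \<union> {(insert (Pos (f c)) (fst c), False) | c. c \<in> N} \<union> {(e, True) | e. e \<in> E},
           B \<union> BV))"

(* msu1_iter phi j s : s is the state (working formula, blocking variables) at the j-th oracle call *)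
inductive msu1_iter :: "'v clause set \<Rightarrow> nat \<Rightarrow> ('v tclause set \<times> 'v set) \<Rightarrow> bool"
  for \<phi> :: "'v clause set" where
  init: "msu1_iter \<phi> 1 ({(c, False) | c. c \<in> \<phi>}, {})"
| step: "msu1_iter \<phi> j s \<Longrightarrow> \<not> satisfiable (fst ` fst s) \<Longrightarrow> msu1_step s s'
          \<Longrightarrow> msu1_iter \<phi> (Suc j) s'"

end

theory Submission
  imports Defs "HOL-Library.Disjoint_Sets"
begin

(* After j-1 unsatisfiable oracle calls, the working formula contains the
   auxiliary clauses of j-1 exactly-one encodings E_0, ..., E_(j-2), over blocking-variable
   sets BV_0, ..., BV_(j-2) whose union is the set of all blocking variables.  These sets
   are pairwise disjoint: every variable of BV_k occurs in E_k (an encoding that does not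
   mention a variable cannot constrain it), hence in the working formula, while the
   blocking variables created later are fresh for that formula.  A model of the working
   formula satisfies every E_k, so it sets exactly one variable of each BV_k, and by
   disjointness exactly j-1 blocking variables altogether. *)

lemma lit_sat_update_other:
  "lit_var l \<noteq> b \<Longrightarrow> lit_sat (\<sigma>(b := v)) l = lit_sat \<sigma> l"
  by (cases l) auto

lemma cnf_sat_update_unused:
  "b \<notin> clause_vars F \<Longrightarrow> cnf_sat (\<sigma>(b := v)) F = cnf_sat \<sigma> F"
  unfolding cnf_sat_def clause_sat_def clause_vars_def
  by (metis (no_types, lifting) UN_I image_eqI lit_sat_update_other)

lemma clause_vars_mono: "F \<subseteq> G \<Longrightarrow> clause_vars F \<subseteq> clause_vars G"
  unfolding clause_vars_def by auto

lemma exactly_one_encoding_model: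
  "exactly_one_encoding E BV \<Longrightarrow> cnf_sat \<sigma> E \<Longrightarrow> card {b\<in>BV. \<sigma> b} = 1"
  unfolding exactly_one_encoding_def by blast

(* An encoding of "exactly one of BV" must mention each variable of BV: otherwise a model
   setting only that variable could be modified to set no variable of BV at all. *)
lemma exactly_one_encoding_vars:
  assumes enc: "exactly_one_encoding E BV"
  shows "BV \<subseteq> clause_vars E"
proof
  fix b assume b: "b \<in> BV"
  show "b \<in> clause_vars E"
  proof (rule ccontr)
    assume unused: "b \<notin> clause_vars E"
    have extends: "(\<exists>\<tau>. (\<forall>x\<in>BV. \<tau> x = (x = b)) \<and> cnf_sat \<tau> E) \<longleftrightarrow>
        card {x\<in>BV. x = b} = 1"
      using enc unfolding exactly_one_encoding_def by simp
    have "{x\<in>BV. x = b} = {b}"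
      using b by auto
    then obtain \<tau> where agree: "\<forall>x\<in>BV. \<tau> x = (x = b)" and sat: "cnf_sat \<tau> E"
      using extends by auto
    have "cnf_sat (\<tau>(b := False)) E"
      using sat cnf_sat_update_unused[OF unused] by simp
    then have "card {x\<in>BV. (\<tau>(b := False)) x} = 1"
      using enc exactly_one_encoding_model by blast
    moreover have "{x\<in>BV. (\<tau>(b := False)) x} = {}"
      using agree by auto
    ultimately show False
      by (metis card.empty zero_neq_one)
  qed
qed

lemma card_true_in_disjoint_union:
  assumes disj: "disjoint_family_on A {..<n}"
    and one: "\<And>k. k < n \<Longrightarrow> card {x\<in>A k. P x} = 1"
  shows "card {x\<in>(\<Union>k<n. A k). P x} = n"
proof -
  have "{x\<in>(\<Union>k<n. A k). P x} = (\<Union>k<n. {x\<in>A k. P x})"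
    by auto
  also have "card \<dots> = (\<Sum>k<n. card {x\<in>A k. P x})"
  proof (rule card_UN_disjoint')
    show "disjoint_family_on (\<lambda>k. {x\<in>A k. P x}) {..<n}"
      using disj by (rule disjoint_family_on_bisimulation) auto
    show "finite {x\<in>A k. P x}" if "k \<in> {..<n}" for k
      using one[of k] that by (auto intro: card_ge_0_finite)
  qed simp
  also have "\<dots> = n"
    using one by simp
  finally show ?thesis .
qed

definition msu1_inv :: "nat \<Rightarrow> 'v tclause set \<Rightarrow> 'v set \<Rightarrow> bool" where
  "msu1_inv n W B \<longleftrightarrow> (\<exists>Es BVs.
     (\<forall>k<n. exactly_one_encoding (Es k) (BVs k) \<and> (\<forall>e\<in>Es k. (e, True) \<in> W)) \<and>
     disjoint_family_on BVs {..<n} \<and> B = (\<Union>k<n. BVs k))"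

lemma msu1_step_properties:
  assumes "msu1_step (W, B) (W', B')"
  obtains E BV where "exactly_one_encoding E BV" and "BV \<inter> clause_vars (fst ` W) = {}"
    and "\<forall>e\<in>E. (e, True) \<in> W'" and "\<forall>e. (e, True) \<in> W \<longrightarrow> (e, True) \<in> W'"
    and "B' = B \<union> BV"
  using assms unfolding msu1_step_def Let_def by fastforce

(* The invariant is preserved: the new blocking variables are disjoint from the old ones,
   because each old set BV_k occurs in its encoding, which is part of W. *)
lemma msu1_inv_step:
  assumes inv: "msu1_inv n W B" and step: "msu1_step (W, B) (W', B')"
  shows "msu1_inv (Suc n) W' B'"
proof -
  obtain Es BVs where
    encs: "\<forall>k<n. exactly_one_encoding (Es k) (BVs k) \<and> (\<forall>e\<in>Es k. (e, True) \<in> W)"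
    and disj: "disjoint_family_on BVs {..<n}" and B: "B = (\<Union>k<n. BVs k)"
    using inv unfolding msu1_inv_def by blast
  obtain E BV where enc: "exactly_one_encoding E BV"
    and fresh: "BV \<inter> clause_vars (fst ` W) = {}"
    and new_aux: "\<forall>e\<in>E. (e, True) \<in> W'" and old_aux: "\<forall>e. (e, True) \<in> W \<longrightarrow> (e, True) \<in> W'"
    and B': "B' = B \<union> BV"
    using msu1_step_properties[OF step] by blast
  have old_vars: "BVs k \<subseteq> clause_vars (fst ` W)" if "k < n" for k
  proof -
    have "BVs k \<subseteq> clause_vars (Es k)"
      using encs that exactly_one_encoding_vars by blast
    also have "\<dots> \<subseteq> clause_vars (fst ` W)"
      using encs that by (intro clause_vars_mono) force
    finally show ?thesis .
  qed
  let ?Es = "Es(n := E)" and ?BVs = "BVs(n := BV)"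
  have "\<forall>k<Suc n. exactly_one_encoding (?Es k) (?BVs k) \<and> (\<forall>e\<in>?Es k. (e, True) \<in> W')"
    using encs enc new_aux old_aux by (auto simp: less_Suc_eq)
  moreover have "disjoint_family_on ?BVs {..<Suc n}"
  proof -
    have "BV \<inter> (\<Union>k<n. BVs k) = {}"
      using fresh old_vars by blast
    moreover have "disjoint_family_on ?BVs {..<n}"
      using disj by (rule disjoint_family_on_bisimulation) auto
    ultimately show ?thesis
      by (simp add: lessThan_Suc disjoint_family_on_insert)
  qed
  moreover have "B' = (\<Union>k<Suc n. ?BVs k)"
    using B B' by (auto simp: lessThan_Suc)
  ultimately show ?thesis
    unfolding msu1_inv_def by blast
qed

lemma msu1_iter_pos: "msu1_iter \<phi> j s \<Longrightarrow> j \<ge> 1"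
  by (induction rule: msu1_iter.induct) auto

lemma msu1_iter_inv: "msu1_iter \<phi> j (W, B) \<Longrightarrow> msu1_inv (j - 1) W B"
proof (induction j "(W, B)" arbitrary: W B rule: msu1_iter.induct)
  case init
  then show ?case
    unfolding msu1_inv_def disjoint_family_on_def by auto
next
  case (step j s W B)
  then have "msu1_inv (Suc (j - 1)) W B"
    using msu1_inv_step[of "j - 1" "fst s" "snd s"] by simp
  then show ?case
    using msu1_iter_pos[OF step.hyps(1)] by simp
qed

theorem proposition2:
  fixes \<phi> :: "'v clause set" and W :: "'v tclause set" and B :: "'v set"
  assumes "finite \<phi>" and "\<forall>c\<in>\<phi>. finite c"
    and "j \<ge> 1"
    and "msu1_iter \<phi> j (W, B)"
  shows "\<not> satisfiable (fst ` W) \<or>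
         (\<forall>\<sigma>. cnf_sat \<sigma> (fst ` W) \<longrightarrow> card {b\<in>B. \<sigma> b} = j - 1)"
proof -
  obtain Es BVs where
    encs: "\<forall>k<j-1. exactly_one_encoding (Es k) (BVs k) \<and> (\<forall>e\<in>Es k. (e, True) \<in> W)"
    and disj: "disjoint_family_on BVs {..<j-1}" and B: "B = (\<Union>k<j-1. BVs k)"
    using msu1_iter_inv[OF assms(4)] unfolding msu1_inv_def by blast
  have "card {b\<in>B. \<sigma> b} = j - 1" if sat: "cnf_sat \<sigma> (fst ` W)" for \<sigma>
  proof -
    have "cnf_sat \<sigma> (Es k)" if "k < j - 1" for k
      using sat encs that unfolding cnf_sat_def by force
    then have "card {b\<in>BVs k. \<sigma> b} = 1" if "k < j - 1" for k
      using encs that exactly_one_encoding_model by blast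
    then show ?thesis
      unfolding B using card_true_in_disjoint_union[OF disj] by blast
  qed
  then show ?thesis
    by blast
qed

end
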